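(* Let $\psi(x)=-2\pi\sin(2\pi x)$, $b\ge2$ an integer, $\gamma\in(1/b,1)$, and let $\Delta_{b,\gamma}=\max_{t\in\mathbb{R}}(\sin(bt)+\gamma\sin t)$. If $k,l\in\mathcal{A}$ and $x^*\in\mathbb{R}$ satisfy $(k,l)\in E(1,x^* )$, then $$\Big|\sin\tfrac{2\pi(x^*+k)}{b}-\sin\tfrac{2\pi(x^*+l)}{b}\Big|\le\frac{2\Delta_{b,\gamma}\gamma}{1-\gamma^2}\le\frac{2\gamma}{1-\gamma},\qquad \Big|\cos\tfrac{2\pi(x^*+k)}{b}-\cos\tfrac{2\pi(x^*+l)}{b}\Big|\le\frac{2\gamma}{b-\gamma},$$ and $$4\sin^2\frac{\pi(k-l)}{b}\le\Big(\frac{2\gamma\Delta_{b,\gamma}}{1-\gamma^2}\Big)^2+\Big(\frac{2\gamma}{b-\gamma}\Big)^2\le\Big(\frac{2\gamma}{1-\gamma}\Big)^2+\Big(\frac{2\gamma}{b-\gamma}\Big)^2.$$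
   Context: $\mathcal{A}=\{0,\dots,b-1\}$. $S(x,\mathbf{i})=\sum_{n\ge1}\gamma^{n-1}\psi\big(\frac{x+i_1+i_2b+\cdots+i_nb^{n-1}}{b^n}\big)$ for $\mathbf{i}\in\mathcal{A}^{\mathbb{Z}^+}$, $S'=\partial_xS$. Sequences $\mathbf{i},\mathbf{j}$ are $(\varepsilon,\delta)$-tangent at $x_0$ if $|S(x_0,\mathbf{i})-S(x_0,\mathbf{j})|\le\varepsilon$ and $|S'(x_0,\mathbf{i})-S'(x_0,\mathbf{j})|\le\delta$. $E(1,x_0;\varepsilon,\delta)$ is the set of pairs $(k,l)\in\mathcal{A}\times\mathcal{A}$ such that for some $\mathbf{u},\mathbf{v}\in\mathcal{A}^{\mathbb{Z}^+}$ the sequences $k\mathbf{u},l\mathbf{v}$ (prepending $k$, resp. $l$) are $(\varepsilon,\delta)$-tangent at $x_0$; $E(1,x_0)=\bigcap_{\varepsilon,\delta>0}E(1,x_0;\varepsilon,\delta)$. *)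

theory Defs
  imports "HOL-Analysis.Analysis"
begin

definition psi :: "real \<Rightarrow> real" where
  "psi y = - 2 * pi * sin (2 * pi * y)"

text \<open>Sequences in A^{Z+} are represented 0-indexed: i_1 = i 0, i_n = i (n-1).
  S(x,i) = sum_{n>=1} gamma^(n-1) psi((x + i_1 + i_2 b + ... + i_n b^(n-1)) / b^n).\<close>
definition S :: "nat \<Rightarrow> real \<Rightarrow> real \<Rightarrow> (nat \<Rightarrow> nat) \<Rightarrow> real" where
  "S b \<gamma> x i = (\<Sum>n. \<gamma> ^ n * psi ((x + (\<Sum>m<Suc n. real (i m) * real b ^ m)) / real b ^ Suc n))"

definition S' :: "nat \<Rightarrow> real \<Rightarrow> real \<Rightarrow> (nat \<Rightarrow> nat) \<Rightarrow> real" where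
  "S' b \<gamma> x i = deriv (\<lambda>y. S b \<gamma> y i) x"

definition digit_seq :: "nat \<Rightarrow> (nat \<Rightarrow> nat) \<Rightarrow> bool" where
  "digit_seq b i \<longleftrightarrow> (\<forall>n. i n < b)"

definition tangent :: "nat \<Rightarrow> real \<Rightarrow> real \<Rightarrow> real \<Rightarrow> real \<Rightarrow> (nat \<Rightarrow> nat) \<Rightarrow> (nat \<Rightarrow> nat) \<Rightarrow> bool" where
  "tangent b \<gamma> \<epsilon> \<delta> x0 i j \<longleftrightarrow>
     \<bar>S b \<gamma> x0 i - S b \<gamma> x0 j\<bar> \<le> \<epsilon> \<and> \<bar>S' b \<gamma> x0 i - S' b \<gamma> x0 j\<bar> \<le> \<delta>"

text \<open>Prepending k to u: case_nat k u.\<close>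
definition E1_eps :: "nat \<Rightarrow> real \<Rightarrow> real \<Rightarrow> real \<Rightarrow> real \<Rightarrow> (nat \<times> nat) set" where
  "E1_eps b \<gamma> x0 \<epsilon> \<delta> = {(k, l). k < b \<and> l < b \<and>
     (\<exists>u v. digit_seq b u \<and> digit_seq b v \<and>
        tangent b \<gamma> \<epsilon> \<delta> x0 (case_nat k u) (case_nat l v))}"

definition E1 :: "nat \<Rightarrow> real \<Rightarrow> real \<Rightarrow> (nat \<times> nat) set" where
  "E1 b \<gamma> x0 = (\<Inter>\<epsilon>\<in>{0<..}. \<Inter>\<delta>\<in>{0<..}. E1_eps b \<gamma> x0 \<epsilon> \<delta>)"

definition Delta :: "nat \<Rightarrow> real \<Rightarrow> real" where
  "Delta b \<gamma> = (SUP t. sin (real b * t) + \<gamma> * sin t)"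

end

theory Submission
  imports Defs
begin

text \<open>
  With the phases \<open>\<theta>\<^sub>n = 2\<pi>(x + i\<^sub>0 + i\<^sub>1 b + \<dots> + i\<^sub>n b\<^sup>n) / b\<^sup>n\<^sup>+\<^sup>1\<close> (digits indexed
  from 0) one has \<open>S = -2\<pi> \<Sum> \<gamma>\<^sup>n sin \<theta>\<^sub>n\<close> and \<open>S' = -(4\<pi>\<^sup>2/b) \<Sum> (\<gamma>/b)\<^sup>n cos \<theta>\<^sub>n\<close>, and
  \<open>\<theta>\<^sub>0\<close> depends only on the first digit. Since \<open>b \<theta>\<^sub>n\<^sub>+\<^sub>1 \<equiv> \<theta>\<^sub>n (mod 2\<pi>)\<close>, the terms
  \<open>n = 2j+1, 2j+2\<close> of the sine series combine to \<open>-2\<pi>\<gamma>\<^sup>2\<^sup>j\<^sup>+\<^sup>1 (sin (b\<theta>) + \<gamma> sin \<theta>)\<close>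
  with \<open>\<theta> = \<theta>\<^sub>2\<^sub>j\<^sub>+\<^sub>2\<close>, which is bounded by \<open>2\<pi>\<gamma>\<^sup>2\<^sup>j\<^sup>+\<^sup>1\<Delta>\<close>; so \<open>S\<close> is within
  \<open>2\<pi>\<Delta>\<gamma>/(1-\<gamma>\<^sup>2)\<close> of its first term, and \<open>S'\<close> is within \<open>(4\<pi>\<^sup>2/b)\<gamma>/(b-\<gamma>)\<close> of
  its first term. For a tangent pair \<open>k\<bold>u\<close>, \<open>l\<bold>v\<close> the values of \<open>S\<close> and of \<open>S'\<close>
  agree up to arbitrarily small errors, so the first terms differ by at most twice these
  bounds. The last inequality follows from
  \<open>(sin a - sin c)\<^sup>2 + (cos a - cos c)\<^sup>2 = 4 sin\<^sup>2((a - c)/2)\<close>.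
\<close>

definition phase :: "nat \<Rightarrow> real \<Rightarrow> (nat \<Rightarrow> nat) \<Rightarrow> nat \<Rightarrow> real" where
  "phase b x i n = 2 * pi * (x + (\<Sum>m<Suc n. real (i m) * real b ^ m)) / real b ^ Suc n"

lemma phase_0_case_nat: "phase b x (case_nat k u) 0 = 2 * pi * (x + real k) / real b"
  by (simp add: phase_def)

lemma sin_add_2pi_multiple: "sin (t + 2 * pi * real (m::nat)) = sin t"
proof -
  have "2 * pi * real m = 2 * real m * pi" by simp
  then show ?thesis by (simp only: sin_add sin_2npi cos_2npi)
qed

lemma sin_mult_phase_Suc:
  assumes "b > 0"
  shows "sin (real b * phase b x i (Suc n)) = sin (phase b x i n)"
proof -
  have "real b * phase b x i (Suc n) = phase b x i n + 2 * pi * real (i (Suc n))"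
    using assms by (simp add: phase_def field_simps)
  then show ?thesis by (simp add: sin_add_2pi_multiple)
qed

lemma sin_cos_dist_sq:
  fixes a c :: real
  shows "(sin a - sin c)\<^sup>2 + (cos a - cos c)\<^sup>2 = 4 * (sin ((a - c) / 2))\<^sup>2"
proof -
  have "(sin a - sin c)\<^sup>2 + (cos a - cos c)\<^sup>2 = 2 - 2 * cos (a - c)"
    by (simp add: power2_eq_square cos_diff algebra_simps)
  also have "cos (a - c) = 1 - 2 * (sin ((a - c) / 2))\<^sup>2"
    by (metis cos_double_sin mult_2 add_diff_cancel_left' diff_add_cancel field_sum_of_halves)
  finally show ?thesis by simp
qed

lemma bdd_above_Delta_range: "bdd_above (range (\<lambda>t. sin (real b * t) + \<gamma> * sin t))"
proof (rule bdd_aboveI2)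
  fix t
  have "\<bar>\<gamma> * sin t\<bar> \<le> \<bar>\<gamma>\<bar>"
    using abs_sin_le_one[of t] by (simp add: abs_mult mult_left_le)
  then show "sin (real b * t) + \<gamma> * sin t \<le> 1 + \<bar>\<gamma>\<bar>"
    using sin_le_one[of "real b * t"] by linarith
qed

lemma le_Delta: "sin (real b * t) + \<gamma> * sin t \<le> Delta b \<gamma>"
  unfolding Delta_def by (rule cSUP_upper[OF _ bdd_above_Delta_range]) simp

lemma abs_le_Delta: "\<bar>sin (real b * t) + \<gamma> * sin t\<bar> \<le> Delta b \<gamma>"
  using le_Delta[of b t \<gamma>] le_Delta[of b "-t" \<gamma>] by simp

lemma Delta_le:
  assumes "0 \<le> \<gamma>"
  shows "Delta b \<gamma> \<le> 1 + \<gamma>"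
  unfolding Delta_def
proof (rule cSUP_least)
  fix t
  have "\<gamma> * sin t \<le> \<gamma>" using sin_le_one[of t] assms by (simp add: mult_left_le)
  then show "sin (real b * t) + \<gamma> * sin t \<le> 1 + \<gamma>"
    using sin_le_one[of "real b * t"] by linarith
qed simp

lemma Delta_ratio_le:
  assumes "0 \<le> \<gamma>" "\<gamma> < 1"
  shows "2 * Delta b \<gamma> * \<gamma> / (1 - \<gamma>\<^sup>2) \<le> 2 * \<gamma> / (1 - \<gamma>)"
proof -
  have pos: "0 < 1 - \<gamma>\<^sup>2" using assms by (simp add: power_less_one_iff)
  then have "2 * Delta b \<gamma> * \<gamma> / (1 - \<gamma>\<^sup>2) \<le> 2 * (1 + \<gamma>) * \<gamma> / (1 - \<gamma>\<^sup>2)"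
    using Delta_le[OF assms(1), of b] assms by (intro divide_right_mono mult_right_mono) auto
  also have "\<dots> = 2 * \<gamma> / (1 - \<gamma>)"
    using assms pos by (simp add: field_simps power2_eq_square)
  finally show ?thesis .
qed

lemma S_sums:
  assumes "\<bar>\<gamma>\<bar> < 1"
  shows "(\<lambda>n. - 2 * pi * \<gamma> ^ n * sin (phase b x i n)) sums S b \<gamma> x i"
proof -
  have "summable (\<lambda>n. - 2 * pi * \<gamma> ^ n * sin (phase b x i n))"
  proof (rule summable_comparison_test)
    show "\<exists>N. \<forall>n\<ge>N. norm (- 2 * pi * \<gamma> ^ n * sin (phase b x i n)) \<le> 2 * pi * \<bar>\<gamma>\<bar> ^ n"
      using abs_sin_le_one by (auto simp: abs_mult power_abs intro!: mult_left_le)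
    show "summable (\<lambda>n. 2 * pi * \<bar>\<gamma>\<bar> ^ n)"
      using assms by (intro summable_mult summable_geometric) auto
  qed
  moreover have "S b \<gamma> x i = (\<Sum>n. - 2 * pi * \<gamma> ^ n * sin (phase b x i n))"
    unfolding S_def psi_def phase_def by (simp add: mult_ac)
  ultimately show ?thesis by (simp add: summable_sums)
qed

lemma S_minus_first_term:
  assumes "b > 0" "0 \<le> \<gamma>" "\<gamma> < 1"
  shows "\<bar>S b \<gamma> x i + 2 * pi * sin (phase b x i 0)\<bar> \<le> 2 * pi * Delta b \<gamma> * \<gamma> / (1 - \<gamma>\<^sup>2)"
proof -
  define a where "a n = - 2 * pi * \<gamma> ^ n * sin (phase b x i n)" for n
  define B where "B = 2 * pi * Delta b \<gamma> * \<gamma>"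
  have "a sums S b \<gamma> x i"
    using S_sums[of \<gamma> b x i] assms unfolding a_def by simp
  then have "(\<lambda>n. a (Suc n)) sums (S b \<gamma> x i - a 0)"
    by (simp add: sums_Suc_iff)
  from sums_group[OF this, of 2]
  have pairs: "(\<lambda>j. a (2 * j + 1) + a (2 * j + 2)) sums (S b \<gamma> x i - a 0)"
    by (simp add: mult.commute)
  have "norm (\<gamma>\<^sup>2) < 1" using assms by (simp add: power_less_one_iff)
  from sums_mult[OF geometric_sums[OF this], of B]
  have geo: "(\<lambda>j. B * (\<gamma>\<^sup>2) ^ j) sums (B / (1 - \<gamma>\<^sup>2))" by simp
  have "norm (a (2 * j + 1) + a (2 * j + 2)) \<le> B * (\<gamma>\<^sup>2) ^ j" for j
  proof -
    let ?t = "phase b x i (2 * j + 2)"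
    have "a (2 * j + 1) + a (2 * j + 2) = - 2 * pi * \<gamma> ^ (2 * j + 1) * (sin (real b * ?t) + \<gamma> * sin ?t)"
      using sin_mult_phase_Suc[OF assms(1), of x i "2 * j + 1"] by (simp add: a_def algebra_simps)
    also have "norm \<dots> \<le> 2 * pi * \<gamma> ^ (2 * j + 1) * Delta b \<gamma>"
      using abs_le_Delta[of b ?t \<gamma>] assms by (simp add: abs_mult mult_left_mono)
    also have "\<dots> = B * (\<gamma>\<^sup>2) ^ j"
      by (simp add: B_def power_mult power_add)
    finally show ?thesis .
  qed
  with pairs geo have "norm (S b \<gamma> x i - a 0) \<le> B / (1 - \<gamma>\<^sup>2)"
    by (rule norm_sums_le)
  then show ?thesis by (simp add: a_def B_def)
qed

lemma S_term_has_derivative: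
  assumes "b > 0"
  shows "((\<lambda>y. \<gamma> ^ n * psi ((y + (\<Sum>m<Suc n. real (i m) * real b ^ m)) / real b ^ Suc n))
     has_field_derivative (- 4 * pi\<^sup>2 * \<gamma> ^ n * cos (phase b y i n) / real b ^ Suc n)) (at y)"
  unfolding psi_def phase_def using assms
  by (auto intro!: derivative_eq_intros simp: power2_eq_square field_simps)

lemma S'_sums:
  assumes "b > 0" "\<bar>\<gamma>\<bar> < 1"
  shows "(\<lambda>n. - 4 * pi\<^sup>2 * \<gamma> ^ n * cos (phase b x i n) / real b ^ Suc n) sums S' b \<gamma> x i"
proof -
  define f where "f n y = \<gamma> ^ n * psi ((y + (\<Sum>m<Suc n. real (i m) * real b ^ m)) / real b ^ Suc n)" for n y
  define f' where "f' n y = - 4 * pi\<^sup>2 * \<gamma> ^ n * cos (phase b y i n) / real b ^ Suc n" for n y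
  define M where "M n = 4 * pi\<^sup>2 / real b * (\<bar>\<gamma>\<bar> / real b) ^ n" for n
  have "summable M"
    unfolding M_def using assms by (intro summable_mult summable_geometric) auto
  have f'_le_M: "norm (f' n y) \<le> M n" for n y
  proof -
    have "norm (f' n y) = 4 * pi\<^sup>2 * \<bar>\<gamma>\<bar> ^ n * \<bar>cos (phase b y i n)\<bar> / real b ^ Suc n"
      by (simp add: f'_def abs_mult power_abs)
    also have "\<dots> \<le> 4 * pi\<^sup>2 * \<bar>\<gamma>\<bar> ^ n / real b ^ Suc n"
      using abs_cos_le_one by (intro divide_right_mono mult_left_le) auto
    also have "\<dots> = M n" by (simp add: M_def power_divide)
    finally show ?thesis .
  qed
  have "uniformly_convergent_on UNIV (\<lambda>n y. \<Sum>k<n. f' k y)"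
    using f'_le_M \<open>summable M\<close> by (rule Weierstrass_m_test')
  moreover have "(\<lambda>n. f n x) = (\<lambda>n. - 2 * pi * \<gamma> ^ n * sin (phase b x i n))"
    by (simp add: f_def psi_def phase_def mult_ac)
  then have "summable (\<lambda>n. f n x)"
    using S_sums[OF assms(2)] sums_summable by metis
  moreover have "\<And>n y. (f n has_field_derivative f' n y) (at y within UNIV)"
    unfolding f_def f'_def using S_term_has_derivative[OF assms(1)] by simp
  ultimately have "((\<lambda>y. \<Sum>n. f n y) has_field_derivative (\<Sum>n. f' n x)) (at x)"
    using has_field_derivative_series'(2)[OF convex_UNIV] by (metis UNIV_I interior_UNIV)
  moreover have "(\<lambda>y. S b \<gamma> y i) = (\<lambda>y. \<Sum>n. f n y)"
    unfolding S_def f_def by simp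
  ultimately have "S' b \<gamma> x i = (\<Sum>n. f' n x)"
    unfolding S'_def by (simp add: DERIV_imp_deriv)
  moreover have "summable (\<lambda>n. f' n x)"
    using \<open>summable M\<close> f'_le_M by (rule summable_comparison_test')
  ultimately show ?thesis unfolding f'_def by (simp add: summable_sums)
qed

lemma S'_minus_first_term:
  assumes "b > 0" "0 \<le> \<gamma>" "\<gamma> < 1"
  shows "\<bar>S' b \<gamma> x i + 4 * pi\<^sup>2 * cos (phase b x i 0) / real b\<bar>
           \<le> 4 * pi\<^sup>2 * \<gamma> / (real b * (real b - \<gamma>))"
proof -
  define d where "d n = - 4 * pi\<^sup>2 * \<gamma> ^ n * cos (phase b x i n) / real b ^ Suc n" for n
  define C where "C = 4 * pi\<^sup>2 * \<gamma> / (real b)\<^sup>2"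
  have "d sums S' b \<gamma> x i"
    using S'_sums[of b \<gamma> x i] assms unfolding d_def by simp
  then have tail: "(\<lambda>n. d (Suc n)) sums (S' b \<gamma> x i - d 0)"
    by (simp add: sums_Suc_iff)
  have "norm (\<gamma> / real b) < 1" using assms by auto
  from sums_mult[OF geometric_sums[OF this], of C]
  have geo: "(\<lambda>n. C * (\<gamma> / real b) ^ n) sums (C * (1 / (1 - \<gamma> / real b)))" .
  have "real b - \<gamma> > 0" using assms by linarith
  then have sum_eq: "C * (1 / (1 - \<gamma> / real b)) = 4 * pi\<^sup>2 * \<gamma> / (real b * (real b - \<gamma>))"
    using assms by (simp add: C_def field_simps power2_eq_square)
  have "norm (d (Suc n)) \<le> C * (\<gamma> / real b) ^ n" for n
  proof -
    have "norm (d (Suc n)) = 4 * pi\<^sup>2 * \<gamma> ^ Suc n * \<bar>cos (phase b x i (Suc n))\<bar> / real b ^ Suc (Suc n)"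
      using assms by (simp add: d_def abs_mult)
    also have "\<dots> \<le> 4 * pi\<^sup>2 * \<gamma> ^ Suc n / real b ^ Suc (Suc n)"
      using assms abs_cos_le_one by (intro divide_right_mono mult_left_le) auto
    also have "\<dots> = C * (\<gamma> / real b) ^ n"
      using assms by (simp add: C_def power_divide field_simps power2_eq_square)
    finally show ?thesis .
  qed
  with tail geo have "norm (S' b \<gamma> x i - d 0) \<le> C * (1 / (1 - \<gamma> / real b))"
    by (rule norm_sums_le)
  then show ?thesis unfolding sum_eq by (simp add: d_def)
qed

lemma abs_diff_le_of_approx:
  fixes p q c B :: real
  assumes "c > 0"
    and "\<And>e. e > 0 \<Longrightarrow> \<exists>s t. \<bar>s - t\<bar> \<le> e \<and> \<bar>s + c * p\<bar> \<le> B \<and> \<bar>t + c * q\<bar> \<le> B"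
  shows "\<bar>p - q\<bar> \<le> 2 * B / c"
proof (rule field_le_epsilon)
  fix e :: real
  assume "e > 0"
  with assms obtain s t where "\<bar>s - t\<bar> \<le> c * e" "\<bar>s + c * p\<bar> \<le> B" "\<bar>t + c * q\<bar> \<le> B"
    by (meson mult_pos_pos)
  moreover have "c * \<bar>p - q\<bar> = \<bar>(s + c * p) - (t + c * q) - (s - t)\<bar>"
    using assms(1) by (simp add: abs_mult flip: right_diff_distrib)
  ultimately have "c * \<bar>p - q\<bar> \<le> c * (2 * B / c + e)"
    using assms(1) by (simp add: algebra_simps)
  then show "\<bar>p - q\<bar> \<le> 2 * B / c + e"
    using assms(1) by simp
qed

lemma E1_tangent:
  assumes "(k, l) \<in> E1 b \<gamma> x" "\<epsilon> > 0"
  obtains u v where "\<bar>S b \<gamma> x (case_nat k u) - S b \<gamma> x (case_nat l v)\<bar> \<le> \<epsilon>"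
    and "\<bar>S' b \<gamma> x (case_nat k u) - S' b \<gamma> x (case_nat l v)\<bar> \<le> \<epsilon>"
  using assms unfolding E1_def E1_eps_def tangent_def by fastforce

lemma E1_sin_close:
  assumes "b > 0" "0 \<le> \<gamma>" "\<gamma> < 1" "(k, l) \<in> E1 b \<gamma> x"
  shows "\<bar>sin (2 * pi * (x + k) / b) - sin (2 * pi * (x + l) / b)\<bar> \<le> 2 * Delta b \<gamma> * \<gamma> / (1 - \<gamma>\<^sup>2)"
proof -
  define B where "B = 2 * pi * Delta b \<gamma> * \<gamma> / (1 - \<gamma>\<^sup>2)"
  have "0 < 1 - \<gamma>\<^sup>2" using assms(2,3) by (simp add: power_less_one_iff)
  have "\<bar>S b \<gamma> x (case_nat m u) + 2 * pi * sin (2 * pi * (x + m) / b)\<bar> \<le> B" for m u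
    using S_minus_first_term[OF assms(1-3), of x "case_nat m u"] by (simp add: B_def phase_0_case_nat)
  with E1_tangent[OF assms(4)]
  have "\<bar>sin (2 * pi * (x + k) / b) - sin (2 * pi * (x + l) / b)\<bar> \<le> 2 * B / (2 * pi)"
    by (intro abs_diff_le_of_approx) (simp, metis)
  also have "\<dots> = 2 * Delta b \<gamma> * \<gamma> / (1 - \<gamma>\<^sup>2)"
    using \<open>0 < 1 - \<gamma>\<^sup>2\<close> by (simp add: B_def field_simps)
  finally show ?thesis .
qed

lemma E1_cos_close:
  assumes "b > 0" "0 \<le> \<gamma>" "\<gamma> < 1" "(k, l) \<in> E1 b \<gamma> x"
  shows "\<bar>cos (2 * pi * (x + k) / b) - cos (2 * pi * (x + l) / b)\<bar> \<le> 2 * \<gamma> / (b - \<gamma>)"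
proof -
  define B where "B = 4 * pi\<^sup>2 * \<gamma> / (real b * (real b - \<gamma>))"
  have "\<bar>S' b \<gamma> x (case_nat m u) + 4 * pi\<^sup>2 / b * cos (2 * pi * (x + m) / b)\<bar> \<le> B" for m u
    using S'_minus_first_term[OF assms(1-3), of x "case_nat m u"] by (simp add: B_def phase_0_case_nat)
  with E1_tangent[OF assms(4)]
  have "\<bar>cos (2 * pi * (x + k) / b) - cos (2 * pi * (x + l) / b)\<bar> \<le> 2 * B / (4 * pi\<^sup>2 / b)"
    using assms(1) by (intro abs_diff_le_of_approx) (simp, metis)
  also have "\<dots> = 2 * \<gamma> / (b - \<gamma>)"
    using assms(1,3) by (simp add: B_def field_simps)
  finally show ?thesis .
qed

theorem lemma3p3:
  fixes b k l :: nat and \<gamma> x :: real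
  assumes "b \<ge> 2" and "1 / real b < \<gamma>" and "\<gamma> < 1"
    and "k < b" and "l < b"
    and "(k, l) \<in> E1 b \<gamma> x"
  shows "\<bar>sin (2 * pi * (x + k) / b) - sin (2 * pi * (x + l) / b)\<bar>
           \<le> 2 * Delta b \<gamma> * \<gamma> / (1 - \<gamma>\<^sup>2)
       \<and> 2 * Delta b \<gamma> * \<gamma> / (1 - \<gamma>\<^sup>2) \<le> 2 * \<gamma> / (1 - \<gamma>)
       \<and> \<bar>cos (2 * pi * (x + k) / b) - cos (2 * pi * (x + l) / b)\<bar> \<le> 2 * \<gamma> / (b - \<gamma>)
       \<and> 4 * (sin (pi * (real k - real l) / b))\<^sup>2
           \<le> (2 * \<gamma> * Delta b \<gamma> / (1 - \<gamma>\<^sup>2))\<^sup>2 + (2 * \<gamma> / (b - \<gamma>))\<^sup>2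
       \<and> (2 * \<gamma> * Delta b \<gamma> / (1 - \<gamma>\<^sup>2))\<^sup>2 + (2 * \<gamma> / (b - \<gamma>))\<^sup>2
           \<le> (2 * \<gamma> / (1 - \<gamma>))\<^sup>2 + (2 * \<gamma> / (b - \<gamma>))\<^sup>2"
proof -
  define a c where "a = 2 * pi * (x + k) / b" and "c = 2 * pi * (x + l) / b"
  define A where "A = 2 * Delta b \<gamma> * \<gamma> / (1 - \<gamma>\<^sup>2)"
  have "b > 0" using assms(1) by simp
  moreover have "0 \<le> \<gamma>" using assms(2) zero_le_divide_1_iff[of "real b"] by linarith
  ultimately have sin_close: "\<bar>sin a - sin c\<bar> \<le> A"
    and cos_close: "\<bar>cos a - cos c\<bar> \<le> 2 * \<gamma> / (b - \<gamma>)"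
    and A_le: "A \<le> 2 * \<gamma> / (1 - \<gamma>)"
    using E1_sin_close E1_cos_close Delta_ratio_le assms(3,6) unfolding a_def c_def A_def by auto
  have "pi * (real k - real l) / b = (a - c) / 2"
    using \<open>b > 0\<close> unfolding a_def c_def by (simp add: field_simps)
  then have "4 * (sin (pi * (real k - real l) / b))\<^sup>2 = (sin a - sin c)\<^sup>2 + (cos a - cos c)\<^sup>2"
    by (simp only: sin_cos_dist_sq)
  moreover have "(sin a - sin c)\<^sup>2 \<le> A\<^sup>2" "(cos a - cos c)\<^sup>2 \<le> (2 * \<gamma> / (b - \<gamma>))\<^sup>2"
    using power_mono[OF sin_close, of 2] power_mono[OF cos_close, of 2] by simp_all
  moreover have "A\<^sup>2 \<le> (2 * \<gamma> / (1 - \<gamma>))\<^sup>2"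
    using power_mono[OF A_le, of 2] sin_close by simp
  moreover have A_alt: "2 * \<gamma> * Delta b \<gamma> / (1 - \<gamma>\<^sup>2) = A"
    unfolding A_def by (simp add: mult_ac)
  ultimately show ?thesis
    using sin_close cos_close A_le
    unfolding a_def[symmetric] c_def[symmetric] A_def[symmetric] A_alt by linarith
qed

end
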